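(* Let $n\ge r\ge1$ and define $P^{\mathrm{RC}}_{n,r}\in\mathbb{F}[x_1,\ldots,x_n,y_1,\ldots,y_r,t_0,t_1,\ldots,t_n]$ by $$P^{\mathrm{RC}}_{n,r}(x,y,t)=\sum_{j=1}^r y_j t_0^j\prod_{k=1}^n(1+x_kt_k^j).$$ Let $N=2^n$ and identify each $i\in[N]$ with the subset $S_i\subseteq[n]$ such that $i-1=\sum_{k\in S_i}2^{k-1}$. Then for every $i\in[N]$, after substituting $t_0=t$ and $t_k=t^{2^{k-1}}$ for $k=1,\ldots,n$ (with $t$ a new variable), the coefficient of the monomial $\prod_{k\in S_i}x_k$ in $P^{\mathrm{RC}}_{n,r}$ (viewed as a multilinear polynomial in $x$) equals $\sum_{j=1}^r y_jt^{ij}$. *)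

theory Defs
  imports Main "HOL-Library.Poly_Mapping"
begin

text \<open>Multivariate polynomials over a coefficient ring 'a in variables indexed by nat:
  a polynomial maps exponent vectors (finitely supported nat => nat) to coefficients,
  with the convolution product of HOL-Library.Poly_Mapping.\<close>

type_synonym 'a mpoly = "(nat \<Rightarrow>\<^sub>0 nat) \<Rightarrow>\<^sub>0 'a"

definition mvar :: "nat \<Rightarrow> 'a::comm_ring_1 mpoly" where
  "mvar v = Poly_Mapping.single (Poly_Mapping.single v 1) 1"

definition mconst :: "'a::comm_ring_1 \<Rightarrow> 'a mpoly" where
  "mconst c = Poly_Mapping.single 0 c"

definition mcoeff :: "'a::comm_ring_1 mpoly \<Rightarrow> (nat \<Rightarrow>\<^sub>0 nat) \<Rightarrow> 'a" where
  "mcoeff p m = Poly_Mapping.lookup p m"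

definition sqfree_mon :: "nat set \<Rightarrow> (nat \<Rightarrow>\<^sub>0 nat)" where
  "sqfree_mon S = (\<Sum>k\<in>S. Poly_Mapping.single k 1)"

definition PRC :: "nat \<Rightarrow> nat \<Rightarrow> (nat \<Rightarrow> 'a::comm_ring_1) \<Rightarrow> (nat \<Rightarrow> 'a) \<Rightarrow> (nat \<Rightarrow> 'a) \<Rightarrow> 'a" where
  "PRC n r x y t = (\<Sum>j=1..r. y j * t 0 ^ j * (\<Prod>k=1..n. 1 + x k * t k ^ j))"

end

theory Submission
  imports Defs
begin

text \<open>After the substitution all t-weights are constants, so each summand
  y_j t_0^j \<Prod>_k (1 + x_k t_k^j) expands into a sum over subsets B of [n] of distinct squarefree
  monomials \<Prod>_{k\<in>B} x_k. The coefficient of \<Prod>_{k\<in>S} x_k is therefore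
  y_j t^j \<Prod>_{k\<in>S} t^(2^(k-1) j) = y_j t^(j (1 + \<Sum>_{k\<in>S} 2^(k-1))) = y_j t^(i j).\<close>

lemma mconst_mult: "mconst a * mconst b = mconst (a * b)"
  by (simp add: mconst_def mult_single)

lemma mconst_power: "mconst a ^ j = mconst (a ^ j)"
  by (induction j) (simp_all add: mconst_mult, simp add: mconst_def)

lemma mvar_mult_mconst: "mvar k * mconst c = Poly_Mapping.single (Poly_Mapping.single k 1) c"
  by (simp add: mvar_def mconst_def mult_single)

lemma prod_single_sqfree_mon:
  assumes "finite B"
  shows "(\<Prod>k\<in>B. Poly_Mapping.single (Poly_Mapping.single k 1) (c k))
         = Poly_Mapping.single (sqfree_mon B) (\<Prod>k\<in>B. c k :: 'a::comm_ring_1)"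
  using assms by (induction B rule: finite_induct) (simp_all add: sqfree_mon_def mult_single)

lemma lookup_sqfree_mon:
  "finite B \<Longrightarrow> Poly_Mapping.lookup (sqfree_mon B) k = (if k \<in> B then 1 else 0)"
  by (simp add: sqfree_mon_def lookup_sum lookup_single when_def)

lemma sqfree_mon_inject:
  assumes "finite B" "finite S"
  shows "sqfree_mon B = sqfree_mon S \<longleftrightarrow> B = S"
proof
  assume "sqfree_mon B = sqfree_mon S"
  then have "\<And>k. (if k \<in> B then 1 else 0::nat) = (if k \<in> S then 1 else 0)"
    using assms lookup_sqfree_mon by metis
  then show "B = S" by (metis one_neq_zero subsetI subset_antisym)
qed simp

lemma prod_one_plus_mvar_mconst:
  assumes "finite K"
  shows "(\<Prod>k\<in>K. 1 + mvar k * mconst (c k))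
         = (\<Sum>B\<in>Pow K. Poly_Mapping.single (sqfree_mon B) (\<Prod>k\<in>B. c k :: 'a::comm_ring_1))"
proof -
  have "(\<Prod>k\<in>K. 1 + mvar k * mconst (c k)) = (\<Prod>k\<in>K. mvar k * mconst (c k) + 1)"
    by (simp add: add.commute)
  also have "\<dots> = (\<Sum>B\<in>Pow K. (\<Prod>k\<in>B. mvar k * mconst (c k)) * (\<Prod>k\<in>K-B. 1))"
    by (rule prod_add[OF assms])
  also have "\<dots> = (\<Sum>B\<in>Pow K. Poly_Mapping.single (sqfree_mon B) (\<Prod>k\<in>B. c k))"
  proof (intro sum.cong refl)
    fix B assume "B \<in> Pow K"
    then have "finite B" using assms finite_subset by blast
    then show "(\<Prod>k\<in>B. mvar k * mconst (c k)) * (\<Prod>k\<in>K-B. 1)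
               = Poly_Mapping.single (sqfree_mon B) (\<Prod>k\<in>B. c k)"
      by (simp only: mvar_mult_mconst prod_single_sqfree_mon prod.neutral_const mult_1_right)
  qed
  finally show ?thesis .
qed

lemma mcoeff_mconst_mult_prod_one_plus_mvar:
  assumes "finite K" "S \<subseteq> K"
  shows "mcoeff (mconst d * (\<Prod>k\<in>K. 1 + mvar k * mconst (c k))) (sqfree_mon S)
         = d * (\<Prod>k\<in>S. c k :: 'a::comm_ring_1)"
proof -
  have fin: "finite B" if "B \<in> Pow K" for B
    using that assms(1) finite_subset by blast
  have "mcoeff (mconst d * (\<Prod>k\<in>K. 1 + mvar k * mconst (c k))) (sqfree_mon S)
        = (\<Sum>B\<in>Pow K. Poly_Mapping.lookup
             (Poly_Mapping.single (sqfree_mon B) (d * (\<Prod>k\<in>B. c k))) (sqfree_mon S))"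
    unfolding prod_one_plus_mvar_mconst[OF assms(1)] sum_distrib_left
    by (simp add: mconst_def mult_single mcoeff_def lookup_sum)
  also have "\<dots> = (\<Sum>B\<in>Pow K. if B = S then d * (\<Prod>k\<in>B. c k) else 0)"
    using fin fin[of S] assms(2)
    by (intro sum.cong refl) (auto simp: lookup_single when_def sqfree_mon_inject)
  also have "\<dots> = d * (\<Prod>k\<in>S. c k)"
    using assms by (simp add: sum.delta)
  finally show ?thesis .
qed

lemma mcoeff_PRC_sqfree_mon:
  assumes "S \<subseteq> {1..n}"
  shows "mcoeff (PRC n r mvar (\<lambda>j. mconst (y j)) (\<lambda>k. mconst (c k))) (sqfree_mon S)
         = (\<Sum>j=1..r. y j * c 0 ^ j * (\<Prod>k\<in>S. c k ^ j :: 'a::comm_ring_1))"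
proof -
  have "PRC n r mvar (\<lambda>j. mconst (y j)) (\<lambda>k. mconst (c k))
        = (\<Sum>j=1..r. mconst (y j * c 0 ^ j) * (\<Prod>k=1..n. 1 + mvar k * mconst (c k ^ j)))"
    by (simp add: PRC_def mconst_power mconst_mult)
  then show ?thesis
    using assms
    by (simp add: mcoeff_def lookup_sum
        mcoeff_mconst_mult_prod_one_plus_mvar[unfolded mcoeff_def])
qed

lemma prod_power_binary_weights:
  fixes T :: "'a::comm_monoid_mult"
  assumes "1 \<le> i" "i - 1 = (\<Sum>k\<in>S. 2 ^ (k - 1))"
  shows "T ^ j * (\<Prod>k\<in>S. (T ^ 2 ^ (k - 1)) ^ j) = T ^ (i * j)"
proof -
  have "(\<Prod>k\<in>S. (T ^ 2 ^ (k - 1)) ^ j) = T ^ (j * (\<Sum>k\<in>S. 2 ^ (k - 1)))"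
    by (simp add: power_mult[symmetric] power_sum sum_distrib_left mult.commute)
  then have "(\<Prod>k\<in>S. (T ^ 2 ^ (k - 1)) ^ j) = T ^ (j * (i - 1))"
    by (simp only: assms(2))
  then show ?thesis
    using assms(1) by (simp add: power_add[symmetric] algebra_simps)
qed

theorem proposition4p2:
  fixes n r :: nat and i :: nat and S :: "nat set"
  assumes "1 \<le> r" and "r \<le> n"
    and "1 \<le> i" and "i \<le> 2 ^ n"
    and "S \<subseteq> {1..n}" and "i - 1 = (\<Sum>k\<in>S. 2 ^ (k - 1))"
  shows "mcoeff
           (PRC n r (\<lambda>k. mvar k)
                    (\<lambda>j. mconst (mvar j))
                    (\<lambda>k. if k = 0 then mconst (mvar 0)
                         else mconst ((mvar 0 :: 'a::field mpoly) ^ (2 ^ (k - 1)))))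
           (sqfree_mon S)
         = (\<Sum>j=1..r. mvar j * mvar 0 ^ (i * j))"
proof -
  define T :: "'a mpoly" where "T = mvar 0"
  define c where "c k = (if k = 0 then T else T ^ 2 ^ (k - 1))" for k
  have "(\<lambda>k. if k = 0 then mconst T else mconst (T ^ 2 ^ (k - 1))) = (\<lambda>k. mconst (c k))"
    by (simp add: c_def fun_eq_iff)
  moreover have "(\<Prod>k\<in>S. c k ^ j) = (\<Prod>k\<in>S. (T ^ 2 ^ (k - 1)) ^ j)" for j
    using assms(5) by (intro prod.cong refl) (auto simp: c_def)
  ultimately have "mcoeff (PRC n r mvar (\<lambda>j. mconst (mvar j))
                 (\<lambda>k. if k = 0 then mconst T else mconst (T ^ 2 ^ (k - 1)))) (sqfree_mon S)
             = (\<Sum>j=1..r. mvar j * (T ^ j * (\<Prod>k\<in>S. (T ^ 2 ^ (k - 1)) ^ j)))"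
    using assms(5) by (simp add: mcoeff_PRC_sqfree_mon mult.assoc, simp add: c_def)
  also have "\<dots> = (\<Sum>j=1..r. mvar j * T ^ (i * j))"
    by (simp only: prod_power_binary_weights[OF assms(3,6)])
  finally show ?thesis
    unfolding T_def .
qed

end
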